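(* Let $R$ be a commutative ring and let $R(S_\infty)$ be the set of all functions $S_\infty\to R$, with product $$(fg)(w)=\sum_{u\cdot v=w}(-1)^{\ell(u)+\ell(v)-\ell(w)}f(u)g(v),$$ the sum over pairs $(u,v)$ whose product in the degenerate Hecke algebra is $w$; let $\underline 1$ be the characteristic function of the identity permutation. Let $f,g,h\in R(S_\infty)$, and assume that for every $w\in S_\infty$ the element $\sum_{u:\,u\cdot w=w}(-1)^{\ell(u)}f(u)$ is not a zero divisor in $R$. Then (i) if $fg=f$ then $g=\underline 1$; (ii) if $fh=\underline 1$ then $hf=\underline 1$.
   Context: $S_\infty=\bigcup_nS_n$. Degenerate Hecke algebra: the $\mathbb Z$-algebra generated by $s_1,s_2,\dots$ with $s_i^2=s_i$, $s_is_j=s_js_i$ for $|i-j|>1$, $s_is_{i+1}s_i=s_{i+1}s_is_{i+1}$; each permutation is identified with the product of generators along one of its reduced words, and these products are again permutations, so the sums above are finite. $\ell$ denotes Coxeter length. This product on $R(S_\infty)$ is associative with identity $\underline 1$. *)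

theory Defs
  imports "HOL-Combinatorics.Perm"
begin

text \<open>S_infinity: finitary permutations of the positive integers, modelled as
  finitely supported permutations of nat (index 0 playing the role of 1).\<close>

type_synonym sinf = "nat perm"

definition sgen :: "nat \<Rightarrow> sinf" where
  "sgen i = Perm.swap i (Suc i)"

definition len :: "sinf \<Rightarrow> nat" where
  "len w = card {(i, j). i < j \<and> Perm.apply w j < Perm.apply w i}"

definition word_prod :: "nat list \<Rightarrow> sinf" where
  "word_prod is = foldr (\<lambda>i p. sgen i * p) is 1"

definition reduced_word :: "nat list \<Rightarrow> sinf \<Rightarrow> bool" where
  "reduced_word is w \<longleftrightarrow> word_prod is = w \<and> length is = len w"

text \<open>Right multiplication by a generator in the degenerate Hecke algebra
  (s_i^2 = s_i): u . s_i = u s_i if the length goes up, u otherwise.\<close>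
definition hgen :: "sinf \<Rightarrow> nat \<Rightarrow> sinf" where
  "hgen u i = (if len u < len (u * sgen i) then u * sgen i else u)"

definition hprod :: "sinf \<Rightarrow> sinf \<Rightarrow> sinf" where
  "hprod u v = foldl hgen u (SOME is. reduced_word is v)"

definition rmul :: "(sinf \<Rightarrow> 'r::comm_ring_1) \<Rightarrow> (sinf \<Rightarrow> 'r) \<Rightarrow> (sinf \<Rightarrow> 'r)" where
  "rmul f g w = (\<Sum>(u, v) \<in> {(u, v). hprod u v = w}.
      (-1) ^ (len u + len v - len w) * f u * g v)"

definition runit :: "sinf \<Rightarrow> 'r::comm_ring_1" where
  "runit w = (if w = 1 then 1 else 0)"

definition non_zero_divisor :: "'r::comm_ring_1 \<Rightarrow> bool" where
  "non_zero_divisor c \<longleftrightarrow> (\<forall>x. c * x = 0 \<longrightarrow> x = 0)"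

end

(*
  Encode a permutation w by its rank matrix r_w(i, k) = #{a < i. k <= w(a)}. The map w |-> r_w
  is injective, and the Demazure product becomes the min-plus product of rank matrices,
  r_(u.v) = r_v * r_u: for a single generator this is a direct computation, and it extends along
  a reduced word because the min-plus product is associative. Hence the Demazure product is
  associative with unit 1, and u.v dominates u and v entrywise, i.e. in the Bruhat order, whose
  down-sets are finite.

  Multiplying functions by (-1)^l(w) turns the product of R(S_infinity) into the plain
  convolution over the 0-Hecke monoid, so it is associative with unit 1. If fg = f, then
  d = g - 1 satisfies fd = 0; if d vanishes strictly below w in the Bruhat order, the value of
  fd at w collapses to (sum over u.w = w of (-1)^l(u) f(u)) * d(w), so d(w) = 0 by regularity,
  and well-founded induction gives d = 0. Part (ii) follows since f(hf) = (fh)f = f.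
*)
theory Submission
  imports Defs "HOL-Library.FuncSet"
begin

unbundle permutation_syntax

lemma ex_affected_subset_lessThan: "\<exists>N. affected (w :: nat perm) \<subseteq> {..<N}"
  using finite_affected finite_nat_set_iff_bounded by (metis lessThan_iff subsetI)

lemma apply_eq_if_affected_subset:
  fixes w :: "nat perm"
  assumes "affected w \<subseteq> {..<N}" "N \<le> a"
  shows "w \<langle>$\<rangle> a = a"
proof (rule ccontr)
  assume "w \<langle>$\<rangle> a \<noteq> a"
  then have "a \<in> affected w"
    by (simp add: in_affected)
  with assms show False
    by auto
qed

lemma apply_less_if_affected_subset:
  fixes w :: "nat perm"
  assumes "affected w \<subseteq> {..<N}" "a < N"
  shows "w \<langle>$\<rangle> a < N"
proof (cases "a \<in> affected w")
  case True
  then have "w \<langle>$\<rangle> a \<in> affected w"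
    by (simp only: apply_affected)
  with assms(1) have "w \<langle>$\<rangle> a \<in> {..<N}"
    by (rule subsetD)
  then show ?thesis
    by simp
next
  case False
  with assms show ?thesis
    by (simp add: in_affected)
qed

lemma finite_perms_affected_subset:
  assumes "finite A"
  shows "finite {p :: 'a perm. affected p \<subseteq> A}"
proof -
  let ?P = "{p :: 'a perm. affected p \<subseteq> A}"
  let ?restr = "\<lambda>p. restrict (Perm.apply p) A"
  have maps_into: "p \<langle>$\<rangle> a \<in> A" if "p \<in> ?P" "a \<in> A" for p a
    using that apply_affected[of p a] by (cases "a \<in> affected p") (auto simp: in_affected)
  have fixes_outside: "p \<langle>$\<rangle> a = a" if "p \<in> ?P" "a \<notin> A" for p a
    using that by (auto simp: in_affected)
  have inj: "inj_on ?restr ?P"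
  proof (rule inj_onI, rule perm_eqI)
    fix p q a assume "p \<in> ?P" "q \<in> ?P" and eq: "?restr p = ?restr q"
    have "?restr p a = ?restr q a"
      using eq by simp
    then show "p \<langle>$\<rangle> a = q \<langle>$\<rangle> a"
      using fixes_outside \<open>p \<in> ?P\<close> \<open>q \<in> ?P\<close> by (cases "a \<in> A") simp_all
  qed
  have "?restr ` ?P \<subseteq> A \<rightarrow>\<^sub>E A"
    using maps_into by auto
  then have "finite (?restr ` ?P)"
    by (rule finite_subset) (simp add: assms finite_PiE)
  then show ?thesis
    using inj by (rule finite_imageD)
qed

section \<open>Inversions and Coxeter length\<close>

definition inversions :: "sinf \<Rightarrow> (nat \<times> nat) set" where
  "inversions w = {(i, j). i < j \<and> w \<langle>$\<rangle> j < w \<langle>$\<rangle> i}"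

lemma len_eq_card_inversions: "len w = card (inversions w)"
  unfolding len_def inversions_def ..

lemma finite_inversions: "finite (inversions w)"
proof -
  obtain N where N: "affected w \<subseteq> {..<N}"
    using ex_affected_subset_lessThan by blast
  have "j < N" if "(i, j) \<in> inversions w" for i j
  proof (rule ccontr)
    assume "\<not> j < N"
    then have "w \<langle>$\<rangle> j = j"
      by (simp add: apply_eq_if_affected_subset[OF N])
    with that have "i < j" "j < w \<langle>$\<rangle> i"
      by (auto simp: inversions_def)
    show False
    proof (cases "i < N")
      case True
      then show False
        using apply_less_if_affected_subset[OF N True] \<open>j < w \<langle>$\<rangle> i\<close> \<open>\<not> j < N\<close> by linarith
    next
      case False
      then show False
        using apply_eq_if_affected_subset[OF N] \<open>i < j\<close> \<open>j < w \<langle>$\<rangle> i\<close> by simp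
    qed
  qed
  then have "inversions w \<subseteq> {..<N} \<times> {..<N}"
    unfolding inversions_def by (auto intro: less_trans)
  then show ?thesis
    by (rule finite_subset) simp
qed

lemma sgen_apply: "sgen i \<langle>$\<rangle> a = transpose i (Suc i) a"
  unfolding sgen_def by transfer simp

lemma inversions_mult_sgen_iff:
  "p \<in> inversions (w * sgen i) - {(i, Suc i)} \<longleftrightarrow>
   map_prod (transpose i (Suc i)) (transpose i (Suc i)) p \<in> inversions w - {(i, Suc i)}"
  by (cases p) (auto simp: inversions_def apply_times sgen_apply transpose_def)

lemma len_mult_sgen_ascent:
  assumes "w \<langle>$\<rangle> i < w \<langle>$\<rangle> (Suc i)"
  shows "len (w * sgen i) = Suc (len w)"
proof -
  let ?\<tau> = "map_prod (transpose i (Suc i)) (transpose i (Suc i))"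
  have \<tau>_\<tau>: "?\<tau> (?\<tau> p) = p" for p
    by (cases p) (simp add: transpose_involutory)
  have "bij_betw ?\<tau> (inversions (w * sgen i) - {(i, Suc i)}) (inversions w - {(i, Suc i)})"
  proof (rule bij_betw_byWitness[where f' = ?\<tau>])
    show "?\<tau> ` (inversions (w * sgen i) - {(i, Suc i)}) \<subseteq> inversions w - {(i, Suc i)}"
      using inversions_mult_sgen_iff[of _ w i] by (intro image_subsetI) (simp only:)
    show "?\<tau> ` (inversions w - {(i, Suc i)}) \<subseteq> inversions (w * sgen i) - {(i, Suc i)}"
    proof (rule image_subsetI)
      fix p assume "p \<in> inversions w - {(i, Suc i)}"
      then show "?\<tau> p \<in> inversions (w * sgen i) - {(i, Suc i)}"
        using inversions_mult_sgen_iff[of "?\<tau> p" w i] by (simp only: \<tau>_\<tau>)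
    qed
  qed (simp_all add: \<tau>_\<tau>)
  then have "card (inversions (w * sgen i) - {(i, Suc i)}) = card (inversions w - {(i, Suc i)})"
    by (rule bij_betw_same_card)
  also have "inversions w - {(i, Suc i)} = inversions w"
    using assms by (simp add: inversions_def)
  finally have "card (inversions (w * sgen i) - {(i, Suc i)}) = len w"
    by (simp add: len_eq_card_inversions)
  moreover have "(i, Suc i) \<in> inversions (w * sgen i)"
    using assms by (simp add: inversions_def apply_times sgen_apply)
  ultimately show ?thesis
    unfolding len_eq_card_inversions by (metis card.remove finite_inversions)
qed

lemma len_mult_sgen_descent:
  assumes "w \<langle>$\<rangle> (Suc i) < w \<langle>$\<rangle> i"
  shows "len w = Suc (len (w * sgen i))"
proof -
  have "(w * sgen i) \<langle>$\<rangle> i < (w * sgen i) \<langle>$\<rangle> (Suc i)"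
    using assms by (simp add: apply_times sgen_apply)
  then have "len (w * sgen i * sgen i) = Suc (len (w * sgen i))"
    by (rule len_mult_sgen_ascent)
  then show ?thesis
    by (simp add: sgen_def mult.assoc)
qed

lemma len_mult_sgen_less_iff: "len w < len (w * sgen i) \<longleftrightarrow> w \<langle>$\<rangle> i < w \<langle>$\<rangle> (Suc i)"
  using len_mult_sgen_ascent[of w i] len_mult_sgen_descent[of w i] apply_inj[of w i "Suc i"]
  by (cases "w \<langle>$\<rangle> i < w \<langle>$\<rangle> (Suc i)") auto

lemma len_mult_sgen_le: "len (w * sgen i) \<le> Suc (len w)"
  using len_mult_sgen_ascent[of w i] len_mult_sgen_descent[of w i] apply_inj[of w i "Suc i"]
  by (cases "w \<langle>$\<rangle> i < w \<langle>$\<rangle> (Suc i)") auto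

lemma len_one [simp]: "len 1 = 0"
proof -
  have "inversions 1 = {}"
    by (auto simp: inversions_def)
  then show ?thesis
    by (simp add: len_eq_card_inversions)
qed

lemma word_prod_Nil [simp]: "word_prod [] = 1"
  by (simp add: word_prod_def)

lemma word_prod_append: "word_prod (xs @ ys) = word_prod xs * word_prod ys"
  unfolding word_prod_def by (induction xs) (simp_all add: mult.assoc)

lemma word_prod_snoc: "word_prod (xs @ [i]) = word_prod xs * sgen i"
  unfolding word_prod_append by (simp add: word_prod_def)

lemma eq_one_if_no_descent:
  fixes w :: "nat perm"
  assumes "\<And>i. w \<langle>$\<rangle> i < w \<langle>$\<rangle> (Suc i)"
  shows "w = 1"
proof (rule perm_eqI)
  fix a
  have mono: "strict_mono (Perm.apply w)"
    using assms by (simp add: strict_mono_Suc_iff)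
  then have "strict_mono (inv (Perm.apply w))"
    by (rule strict_mono_inv) (simp_all add: bij_is_surj bij_is_inj)
  then have "w \<langle>$\<rangle> a \<le> inv (Perm.apply w) (w \<langle>$\<rangle> a)"
    by (rule strict_mono_imp_increasing)
  moreover have "a \<le> w \<langle>$\<rangle> a"
    using mono by (rule strict_mono_imp_increasing)
  ultimately show "w \<langle>$\<rangle> a = 1 \<langle>$\<rangle> a"
    by (simp add: bij_is_inj)
qed

lemma reduced_word_exists: "\<exists>is. reduced_word is w"
proof (induction "len w" arbitrary: w rule: less_induct)
  case less
  show ?case
  proof (cases "\<forall>i. w \<langle>$\<rangle> i < w \<langle>$\<rangle> (Suc i)")
    case True
    then have "w = 1"
      by (simp add: eq_one_if_no_descent)
    then have "reduced_word [] w"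
      by (simp add: reduced_word_def)
    then show ?thesis ..
  next
    case False
    then obtain i where "w \<langle>$\<rangle> (Suc i) < w \<langle>$\<rangle> i"
      by (metis apply_inj linorder_neqE_nat n_not_Suc_n)
    then have len_w: "len w = Suc (len (w * sgen i))"
      by (rule len_mult_sgen_descent)
    then obtain js where js: "reduced_word js (w * sgen i)"
      using less by (metis lessI)
    have "word_prod (js @ [i]) = w"
      using js by (simp add: reduced_word_def word_prod_snoc mult.assoc sgen_def)
    moreover have "length (js @ [i]) = len w"
      using js len_w by (simp add: reduced_word_def)
    ultimately show ?thesis
      unfolding reduced_word_def by blast
  qed
qed

definition minplus ::
    "('i \<Rightarrow> 'j \<Rightarrow> 'a::{wellorder, ordered_ab_semigroup_add}) \<Rightarrow> ('j \<Rightarrow> 'k \<Rightarrow> 'a) \<Rightarrow>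
      'i \<Rightarrow> 'k \<Rightarrow> 'a" where
  "minplus A B i k = (LEAST x. \<exists>j. x = A i j + B j k)"

lemma minplus_le: "minplus A B i k \<le> A i j + B j k"
  unfolding minplus_def by (rule Least_le) blast

lemma minplus_attained: "\<exists>j. minplus A B i k = A i j + B j k"
  unfolding minplus_def by (rule LeastI_ex) blast

lemma minplus_assoc: "minplus (minplus A B) C = minplus A (minplus B C)"
proof (intro ext antisym)
  fix i k
  obtain j l where j: "minplus (minplus A B) C i k = minplus A B i j + C j k"
    and l: "minplus A B i j = A i l + B l j"
    using minplus_attained by metis
  have "minplus A (minplus B C) i k \<le> A i l + minplus B C l k"
    by (rule minplus_le)
  also have "\<dots> \<le> A i l + (B l j + C j k)"
    by (intro add_left_mono minplus_le)
  finally show "minplus A (minplus B C) i k \<le> minplus (minplus A B) C i k"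
    using j l by (simp add: add.assoc)
next
  fix i k
  obtain l j where l: "minplus A (minplus B C) i k = A i l + minplus B C l k"
    and j: "minplus B C l k = B l j + C j k"
    using minplus_attained by metis
  have "minplus (minplus A B) C i k \<le> minplus A B i j + C j k"
    by (rule minplus_le)
  also have "\<dots> \<le> (A i l + B l j) + C j k"
    by (intro add_right_mono minplus_le)
  finally show "minplus (minplus A B) C i k \<le> minplus A (minplus B C) i k"
    using j l by (simp add: add.assoc)
qed

section \<open>Rank matrices\<close>

definition rank :: "sinf \<Rightarrow> nat \<Rightarrow> nat \<Rightarrow> nat" where
  "rank w i k = card {a. a < i \<and> k \<le> w \<langle>$\<rangle> a}"

lemma card_le_if_perm_maps_into:
  assumes "Perm.apply w ` A \<subseteq> B" "finite B"
  shows "card A \<le> card B"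
proof -
  have "inj_on (Perm.apply w) A"
    by (simp add: apply_inj inj_on_def)
  with assms show ?thesis
    by (metis card_inj_on_le)
qed

lemma rank_0 [simp]: "rank w 0 k = 0"
  by (simp add: rank_def)

lemma rank_Suc: "rank w (Suc i) k = rank w i k + (if k \<le> w \<langle>$\<rangle> i then 1 else 0)"
proof -
  have "{a. a < Suc i \<and> k \<le> w \<langle>$\<rangle> a} =
    (if k \<le> w \<langle>$\<rangle> i then insert i {a. a < i \<and> k \<le> w \<langle>$\<rangle> a} else {a. a < i \<and> k \<le> w \<langle>$\<rangle> a})"
    by (auto simp: less_Suc_eq)
  then show ?thesis
    by (simp add: rank_def)
qed

lemma rank_mono: "i \<le> j \<Longrightarrow> rank w i k \<le> rank w j k"
  unfolding rank_def by (rule card_mono) auto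

lemma rank_le_diff_add: "rank w i k \<le> (i - j) + rank w j k"
proof -
  have "{a. a < i \<and> k \<le> w \<langle>$\<rangle> a} \<subseteq> {j..<i} \<union> {a. a < j \<and> k \<le> w \<langle>$\<rangle> a}"
    by auto
  then have "rank w i k \<le> card ({j..<i} \<union> {a. a < j \<and> k \<le> w \<langle>$\<rangle> a})"
    unfolding rank_def by (rule card_mono[rotated]) auto
  also have "\<dots> \<le> card {j..<i} + card {a. a < j \<and> k \<le> w \<langle>$\<rangle> a}"
    by (rule card_Un_le)
  finally show ?thesis
    by (simp add: rank_def)
qed

lemma rank_le_add_diff: "rank w i k \<le> rank w i j + (j - k)"
proof -
  let ?low = "{a. a < i \<and> k \<le> w \<langle>$\<rangle> a \<and> w \<langle>$\<rangle> a < j}"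
  have "{a. a < i \<and> k \<le> w \<langle>$\<rangle> a} \<subseteq> {a. a < i \<and> j \<le> w \<langle>$\<rangle> a} \<union> ?low"
    by auto
  then have "rank w i k \<le> card ({a. a < i \<and> j \<le> w \<langle>$\<rangle> a} \<union> ?low)"
    unfolding rank_def by (rule card_mono[rotated]) auto
  also have "\<dots> \<le> rank w i j + card ?low"
    unfolding rank_def by (rule card_Un_le)
  also have "card ?low \<le> card {k..<j}"
    by (rule card_le_if_perm_maps_into) auto
  finally show ?thesis
    by simp
qed

lemma diff_le_rank: "i - k \<le> rank w i k"
proof -
  have "{..<i} = {a. a < i \<and> k \<le> w \<langle>$\<rangle> a} \<union> {a. a < i \<and> w \<langle>$\<rangle> a < k}"
    by auto
  then have "i \<le> rank w i k + card {a. a < i \<and> w \<langle>$\<rangle> a < k}"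
    unfolding rank_def by (metis card_Un_le card_lessThan)
  also have "card {a. a < i \<and> w \<langle>$\<rangle> a < k} \<le> card {..<k}"
    by (rule card_le_if_perm_maps_into) auto
  finally show ?thesis
    by simp
qed

lemma rank_one: "rank 1 i k = i - k"
proof -
  have "{a. a < i \<and> k \<le> 1 \<langle>$\<rangle> a} = {k..<i}"
    by auto
  then show ?thesis
    by (simp add: rank_def)
qed

lemma rank_inj: "rank u = rank w \<Longrightarrow> u = w"
proof (rule perm_eqI)
  fix a
  assume eq: "rank u = rank w"
  have step: "k \<le> x \<langle>$\<rangle> a \<longleftrightarrow> rank x (Suc a) k = Suc (rank x a k)" for x k
    by (simp add: rank_Suc)
  have "u \<langle>$\<rangle> a \<le> w \<langle>$\<rangle> a"
    using step[where x = u and k = "u \<langle>$\<rangle> a"] step[where x = w and k = "u \<langle>$\<rangle> a"] eq by simp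
  moreover have "w \<langle>$\<rangle> a \<le> u \<langle>$\<rangle> a"
    using step[where x = w and k = "w \<langle>$\<rangle> a"] step[where x = u and k = "w \<langle>$\<rangle> a"] eq by simp
  ultimately show "u \<langle>$\<rangle> a = w \<langle>$\<rangle> a"
    by simp
qed

lemma minplus_rank_one_left: "minplus (rank 1) (rank w) = rank w"
proof (intro ext antisym)
  fix i k
  show "minplus (rank 1) (rank w) i k \<le> rank w i k"
    using minplus_le[of "rank 1" "rank w" i k i] by (simp add: rank_one)
  obtain j where "minplus (rank 1) (rank w) i k = rank 1 i j + rank w j k"
    using minplus_attained[of "rank 1" "rank w" i k] by blast
  then show "rank w i k \<le> minplus (rank 1) (rank w) i k"
    using rank_le_diff_add[of w i k j] by (simp add: rank_one)
qed

lemma minplus_rank_one_right: "minplus (rank w) (rank 1) = rank w"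
proof (intro ext antisym)
  fix i k
  show "minplus (rank w) (rank 1) i k \<le> rank w i k"
    using minplus_le[of "rank w" "rank 1" i k k] by (simp add: rank_one)
  obtain j where "minplus (rank w) (rank 1) i k = rank w i j + rank 1 j k"
    using minplus_attained[of "rank w" "rank 1" i k] by blast
  then show "rank w i k \<le> minplus (rank w) (rank 1) i k"
    using rank_le_add_diff[of w i k j] by (simp add: rank_one)
qed

lemma rank_le_minplus_left: "rank v i k \<le> minplus (rank v) (rank u) i k"
proof -
  obtain j where "minplus (rank v) (rank u) i k = rank v i j + rank u j k"
    using minplus_attained[of "rank v" "rank u" i k] by blast
  then show ?thesis
    using rank_le_add_diff[of v i k j] diff_le_rank[of j k u] by simp
qed

lemma rank_le_minplus_right: "rank u i k \<le> minplus (rank v) (rank u) i k"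
proof -
  obtain j where "minplus (rank v) (rank u) i k = rank v i j + rank u j k"
    using minplus_attained[of "rank v" "rank u" i k] by blast
  then show ?thesis
    using rank_le_diff_add[of u i k j] diff_le_rank[of i j v] by simp
qed

lemma rank_sgen: "rank (sgen i) a k = (a - k) + (if a = Suc i \<and> k = Suc i then 1 else 0)"
  by (induction a) (auto simp: rank_Suc sgen_apply transpose_def)

lemma rank_mult_sgen:
  "rank (w * sgen i) a k =
    (if a = Suc i then rank w i k + (if k \<le> w \<langle>$\<rangle> (Suc i) then 1 else 0) else rank w a k)"
proof (induction a)
  case (Suc a)
  then show ?case
    by (cases "a = Suc i") (auto simp: rank_Suc apply_times sgen_apply transpose_def)
qed simp

section \<open>The Demazure product\<close>

lemma minplus_rank_sgen_other:
  "a \<noteq> Suc i \<Longrightarrow> minplus (rank (sgen i)) (rank w) a k = rank w a k"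
  using minplus_le[of "rank (sgen i)" "rank w" a k a] rank_le_minplus_right[of w a k "sgen i"]
  by (simp add: rank_sgen)

lemma minplus_rank_sgen_Suc:
  "minplus (rank (sgen i)) (rank w) (Suc i) k = min (Suc (rank w i k)) (rank w (Suc (Suc i)) k)"
proof (rule antisym)
  show "minplus (rank (sgen i)) (rank w) (Suc i) k \<le> min (Suc (rank w i k)) (rank w (Suc (Suc i)) k)"
    using minplus_le[of "rank (sgen i)" "rank w" "Suc i" k i]
      minplus_le[of "rank (sgen i)" "rank w" "Suc i" k "Suc (Suc i)"]
    by (simp add: rank_sgen)
next
  obtain j where j: "minplus (rank (sgen i)) (rank w) (Suc i) k = rank (sgen i) (Suc i) j + rank w j k"
    using minplus_attained[of "rank (sgen i)" "rank w" "Suc i" k] by blast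
  consider "j = Suc i" | "j \<le> i" | "Suc (Suc i) \<le> j"
    by linarith
  then show "min (Suc (rank w i k)) (rank w (Suc (Suc i)) k) \<le> minplus (rank (sgen i)) (rank w) (Suc i) k"
  proof cases
    case 1
    then show ?thesis
      using j rank_mono[of i "Suc i" w k] by (simp add: rank_sgen)
  next
    case 2
    then show ?thesis
      using j rank_le_diff_add[of w i k j] by (simp add: rank_sgen)
  next
    case 3
    then show ?thesis
      using j rank_mono[of "Suc (Suc i)" j w k] by (simp add: rank_sgen)
  qed
qed

lemma rank_hgen: "rank (hgen w i) = minplus (rank (sgen i)) (rank w)"
proof (intro ext)
  fix a k
  show "rank (hgen w i) a k = minplus (rank (sgen i)) (rank w) a k"
  proof (cases "a = Suc i")
    case True
    have "w \<langle>$\<rangle> i \<noteq> w \<langle>$\<rangle> (Suc i)"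
      by (simp add: apply_inj)
    with True show ?thesis
      by (auto simp: minplus_rank_sgen_Suc hgen_def len_mult_sgen_less_iff rank_mult_sgen rank_Suc
          apply_times sgen_apply)
  qed (simp add: minplus_rank_sgen_other hgen_def rank_mult_sgen)
qed

lemma len_word_prod_le: "len (word_prod is) \<le> length is"
proof (induction "is" rule: rev_induct)
  case (snoc i js)
  then show ?case
    using len_mult_sgen_le[of "word_prod js" i] by (simp add: word_prod_snoc)
qed simp

lemma rank_foldl_hgen:
  "length is = len (word_prod is) \<Longrightarrow> rank (foldl hgen w is) = minplus (rank (word_prod is)) (rank w)"
proof (induction "is" rule: rev_induct)
  case Nil
  then show ?case
    by (simp add: minplus_rank_one_left)
next
  case (snoc i js)
  define x where "x = word_prod js"
  have "Suc (length js) = len (x * sgen i)"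
    using snoc.prems by (simp add: word_prod_snoc x_def)
  moreover have "len x \<le> length js"
    unfolding x_def by (rule len_word_prod_le)
  moreover have "len (x * sgen i) \<le> Suc (len x)"
    by (rule len_mult_sgen_le)
  ultimately have reduced: "length js = len x" and up: "len x < len (x * sgen i)"
    by linarith+
  have "rank (foldl hgen w (js @ [i])) = minplus (rank (sgen i)) (minplus (rank x) (rank w))"
    using snoc.IH reduced by (simp add: rank_hgen x_def)
  also have "\<dots> = minplus (rank (hgen x i)) (rank w)"
    by (simp add: minplus_assoc rank_hgen)
  also have "hgen x i = word_prod (js @ [i])"
    using up by (simp add: hgen_def word_prod_snoc x_def)
  finally show ?case .
qed

lemma reduced_word_SOME: "reduced_word (SOME is. reduced_word is w) w"
  using reduced_word_exists by (rule someI_ex)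

lemma rank_hprod: "rank (hprod u v) = minplus (rank v) (rank u)"
  using reduced_word_SOME[of v] rank_foldl_hgen
  unfolding hprod_def reduced_word_def by metis

lemma hprod_assoc: "hprod (hprod u v) w = hprod u (hprod v w)"
  by (rule rank_inj) (simp add: rank_hprod minplus_assoc)

lemma hprod_one_left [simp]: "hprod 1 w = w"
  by (rule rank_inj) (simp add: rank_hprod minplus_rank_one_right)

lemma hprod_one_right [simp]: "hprod w 1 = w"
  by (rule rank_inj) (simp add: rank_hprod minplus_rank_one_left)

lemma len_foldl_hgen_le: "len (foldl hgen w is) \<le> len w + length is"
proof (induction "is" arbitrary: w)
  case (Cons i js)
  have "len (hgen w i) \<le> Suc (len w)"
    using len_mult_sgen_le[of w i] by (simp add: hgen_def)
  then show ?case
    using Cons[of "hgen w i"] by simp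
qed simp

lemma len_hprod_le: "len (hprod u v) \<le> len u + len v"
  using reduced_word_SOME[of v] len_foldl_hgen_le
  unfolding hprod_def reduced_word_def by metis

section \<open>Bruhat order\<close>

text \<open>By the rank-matrix criterion this is the Bruhat order.\<close>

definition bruhat_le :: "sinf \<Rightarrow> sinf \<Rightarrow> bool" where
  "bruhat_le v w \<longleftrightarrow> (\<forall>i k. rank v i k \<le> rank w i k)"

lemma bruhat_le_refl: "bruhat_le w w"
  by (simp add: bruhat_le_def)

lemma bruhat_le_trans: "bruhat_le u v \<Longrightarrow> bruhat_le v w \<Longrightarrow> bruhat_le u w"
  unfolding bruhat_le_def using le_trans by blast

lemma bruhat_le_antisym: "bruhat_le v w \<Longrightarrow> bruhat_le w v \<Longrightarrow> v = w"
  unfolding bruhat_le_def by (intro rank_inj ext antisym) simp_all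

lemma bruhat_le_hprod_left: "bruhat_le u (hprod u v)"
  by (simp add: bruhat_le_def rank_hprod rank_le_minplus_right)

lemma bruhat_le_hprod_right: "bruhat_le v (hprod u v)"
  by (simp add: bruhat_le_def rank_hprod rank_le_minplus_left)

lemma rank_diag_eq_0_iff: "rank w k k = 0 \<longleftrightarrow> Perm.apply w ` {..<k} \<subseteq> {..<k}"
  by (auto simp: rank_def not_le)

lemma apply_eq_if_maps_lessThan:
  fixes w :: "nat perm"
  assumes maps: "\<And>k. N \<le> k \<Longrightarrow> Perm.apply w ` {..<k} \<subseteq> {..<k}" and "N \<le> a"
  shows "w \<langle>$\<rangle> a = a"
proof -
  have "inj_on (Perm.apply w) {..<a}"
    by (simp add: apply_inj inj_on_def)
  then have onto: "Perm.apply w ` {..<a} = {..<a}"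
    using maps[OF \<open>N \<le> a\<close>] by (simp add: card_image card_subset_eq)
  have "w \<langle>$\<rangle> a \<notin> Perm.apply w ` {..<a}"
    by (auto simp: apply_inj)
  then have "a \<le> w \<langle>$\<rangle> a"
    using onto by (simp add: not_less)
  moreover have "w \<langle>$\<rangle> a < Suc a"
    using maps[of "Suc a"] \<open>N \<le> a\<close> by auto
  ultimately show ?thesis
    by simp
qed

lemma finite_bruhat_le: "finite {v. bruhat_le v w}"
proof -
  obtain N where N: "affected w \<subseteq> {..<N}"
    using ex_affected_subset_lessThan by blast
  have "affected v \<subseteq> {..<N}" if "bruhat_le v w" for v
  proof -
    have "Perm.apply v ` {..<k} \<subseteq> {..<k}" if "N \<le> k" for k
    proof -
      have "affected w \<subseteq> {..<k}"
        using N \<open>N \<le> k\<close> by auto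
      then have "rank w k k = 0"
        using apply_less_if_affected_subset rank_diag_eq_0_iff by blast
      then show ?thesis
        using \<open>bruhat_le v w\<close> rank_diag_eq_0_iff by (metis bruhat_le_def le_zero_eq)
    qed
    then have "v \<langle>$\<rangle> a = a" if "N \<le> a" for a
      using apply_eq_if_maps_lessThan that by blast
    then show ?thesis
      by (metis in_affected lessThan_iff not_less subsetI)
  qed
  then have "{v. bruhat_le v w} \<subseteq> {v. affected v \<subseteq> {..<N}}"
    by blast
  then show ?thesis
    by (rule finite_subset) (simp add: finite_perms_affected_subset)
qed

lemma wf_bruhat_less: "wf {(v, w). bruhat_le v w \<and> v \<noteq> w}"
proof (rule wf_subset[OF wf_measure[of "\<lambda>w. card {v. bruhat_le v w}"]], safe)
  fix v w
  assume "bruhat_le v w" "v \<noteq> w"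
  then have "{x. bruhat_le x v} \<subset> {x. bruhat_le x w}"
    using bruhat_le_trans bruhat_le_antisym bruhat_le_refl by blast
  then show "(v, w) \<in> measure (\<lambda>w. card {v. bruhat_le v w})"
    by (simp add: psubset_card_mono finite_bruhat_le)
qed

section \<open>The convolution algebra of the 0-Hecke monoid\<close>

definition hfibre :: "sinf \<Rightarrow> (sinf \<times> sinf) set" where
  "hfibre w = {(u, v). hprod u v = w}"

definition hconv :: "(sinf \<Rightarrow> 'r::comm_semiring_1) \<Rightarrow> (sinf \<Rightarrow> 'r) \<Rightarrow> sinf \<Rightarrow> 'r" where
  "hconv f g w = (\<Sum>(u, v) \<in> hfibre w. f u * g v)"

lemma finite_hfibre: "finite (hfibre w)"
proof -
  have "hfibre w \<subseteq> {v. bruhat_le v w} \<times> {v. bruhat_le v w}"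
    unfolding hfibre_def using bruhat_le_hprod_left bruhat_le_hprod_right by blast
  then show ?thesis
    by (rule finite_subset) (simp add: finite_bruhat_le)
qed

lemma hconv_runit_left: "hconv runit f = f"
proof
  fix w
  have "hconv runit f w = (\<Sum>p \<in> hfibre w. if p = (1, w) then f w else 0)"
    unfolding hconv_def by (intro sum.cong) (auto simp: runit_def hfibre_def split: if_splits)
  also have "\<dots> = f w"
    using finite_hfibre[of w] unfolding hfibre_def by simp
  finally show "hconv runit f w = f w" .
qed

lemma hconv_runit_right: "hconv f runit = f"
proof
  fix w
  have "hconv f runit w = (\<Sum>p \<in> hfibre w. if p = (w, 1) then f w else 0)"
    unfolding hconv_def by (intro sum.cong) (auto simp: runit_def hfibre_def split: if_splits)
  also have "\<dots> = f w"
    using finite_hfibre[of w] unfolding hfibre_def by simp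
  finally show "hconv f runit w = f w" .
qed

lemma hconv_hconv_left:
  "hconv (hconv a b) c w = (\<Sum>(x, y, z) \<in> {(x, y, z). hprod (hprod x y) z = w}. a x * b y * c z)"
proof -
  have "hconv (hconv a b) c w = (\<Sum>(p, z) \<in> hfibre w. \<Sum>(x, y) \<in> hfibre p. a x * b y * c z)"
    unfolding hconv_def by (simp add: sum_distrib_right case_prod_unfold)
  also have "\<dots> = (\<Sum>((p, z), (x, y)) \<in> Sigma (hfibre w) (\<lambda>(p, z). hfibre p). a x * b y * c z)"
    using sum.Sigma[of "hfibre w" "\<lambda>(p, z). hfibre p" "\<lambda>(p, z) (x, y). a x * b y * c z"]
    by (simp add: finite_hfibre split_def)
  also have "\<dots> = (\<Sum>(x, y, z) \<in> {(x, y, z). hprod (hprod x y) z = w}. a x * b y * c z)"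
    by (rule sum.reindex_bij_witness[where i = "\<lambda>(x, y, z). ((hprod x y, z), (x, y))"
          and j = "\<lambda>((p, z), (x, y)). (x, y, z)"]) (auto simp: hfibre_def)
  finally show ?thesis .
qed

lemma hconv_hconv_right:
  "hconv a (hconv b c) w = (\<Sum>(x, y, z) \<in> {(x, y, z). hprod x (hprod y z) = w}. a x * b y * c z)"
proof -
  have "hconv a (hconv b c) w = (\<Sum>(x, p) \<in> hfibre w. \<Sum>(y, z) \<in> hfibre p. a x * b y * c z)"
    unfolding hconv_def by (simp add: sum_distrib_left case_prod_unfold mult.assoc)
  also have "\<dots> = (\<Sum>((x, p), (y, z)) \<in> Sigma (hfibre w) (\<lambda>(x, p). hfibre p). a x * b y * c z)"
    using sum.Sigma[of "hfibre w" "\<lambda>(x, p). hfibre p" "\<lambda>(x, p) (y, z). a x * b y * c z"]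
    by (simp add: finite_hfibre split_def)
  also have "\<dots> = (\<Sum>(x, y, z) \<in> {(x, y, z). hprod x (hprod y z) = w}. a x * b y * c z)"
    by (rule sum.reindex_bij_witness[where i = "\<lambda>(x, y, z). ((x, hprod y z), (y, z))"
          and j = "\<lambda>((x, p), (y, z)). (x, y, z)"]) (auto simp: hfibre_def)
  finally show ?thesis .
qed

lemma hconv_assoc: "hconv (hconv a b) c = hconv a (hconv b c)"
  by (rule ext) (simp add: hconv_hconv_left hconv_hconv_right hprod_assoc)

lemma hconv_diff_right:
  fixes f :: "sinf \<Rightarrow> 'r::comm_ring_1"
  shows "hconv f (\<lambda>v. g v - h v) w = hconv f g w - hconv f h w"
  unfolding hconv_def by (simp add: sum_subtractf right_diff_distrib case_prod_unfold)

lemma hconv_eq_if_vanishes_below: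
  assumes "\<And>v. bruhat_le v w \<Longrightarrow> v \<noteq> w \<Longrightarrow> d v = 0"
  shows "hconv f d w = (\<Sum>u \<in> {u. hprod u w = w}. f u) * d w"
proof -
  have "hconv f d w = (\<Sum>(u, v) \<in> hfibre w. if v = w then f u * d w else 0)"
    unfolding hconv_def
    by (intro sum.cong) (auto simp: hfibre_def assms bruhat_le_hprod_right)
  also have "\<dots> = (\<Sum>(u, v) \<in> (\<lambda>u. (u, w)) ` {u. hprod u w = w}. f u * d w)"
    using finite_hfibre[of w] unfolding hfibre_def
    by (intro sum.mono_neutral_cong_right) auto
  also have "\<dots> = (\<Sum>u \<in> {u. hprod u w = w}. f u) * d w"
    by (simp add: sum.reindex inj_on_def sum_distrib_right)
  finally show ?thesis .
qed

lemma hconv_right_unit_unique: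
  fixes f g :: "sinf \<Rightarrow> 'r::comm_ring_1"
  assumes regular: "\<And>w. non_zero_divisor (\<Sum>u \<in> {u. hprod u w = w}. f u)"
    and unit: "hconv f g = f"
  shows "g = runit"
proof -
  define d where "d v = g v - runit v" for v
  have "d w = 0" for w
  proof (induction w rule: wf_induct_rule[OF wf_bruhat_less])
    case (1 w)
    then have "hconv f d w = (\<Sum>u \<in> {u. hprod u w = w}. f u) * d w"
      by (intro hconv_eq_if_vanishes_below) simp
    moreover have "hconv f d w = 0"
      unfolding d_def hconv_diff_right unit hconv_runit_right by simp
    ultimately show "d w = 0"
      using regular[of w] unfolding non_zero_divisor_def by simp
  qed
  then show ?thesis
    by (simp add: d_def fun_eq_iff)
qed

definition twist :: "(sinf \<Rightarrow> 'r::comm_ring_1) \<Rightarrow> sinf \<Rightarrow> 'r" where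
  "twist f w = (-1) ^ len w * f w"

lemma twist_twist [simp]: "twist (twist f) = f"
  by (simp add: twist_def fun_eq_iff flip: mult.assoc power_add)

lemma twist_runit [simp]: "twist runit = runit"
  by (simp add: twist_def runit_def fun_eq_iff)

lemma twist_inj: "twist f = twist g \<Longrightarrow> f = g"
  by (metis twist_twist)

lemma twist_rmul: "twist (rmul f g) = hconv (twist f) (twist g)"
proof
  fix w
  have "twist (rmul f g) w =
      (\<Sum>(u, v) \<in> hfibre w. (-1) ^ len w * (-1) ^ (len u + len v - len w) * f u * g v)"
    by (simp add: twist_def rmul_def hfibre_def sum_distrib_left case_prod_unfold mult.assoc)
  also have "\<dots> = (\<Sum>(u, v) \<in> hfibre w. twist f u * twist g v)"
  proof (intro sum.cong refl, clarify)
    fix u v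
    assume "(u, v) \<in> hfibre w"
    then have "len w \<le> len u + len v"
      using len_hprod_le by (auto simp: hfibre_def)
    then have "(-1) ^ len w * (-1) ^ (len u + len v - len w) = ((-1) ^ (len u + len v) :: 'a)"
      by (simp flip: power_add)
    then show "(-1) ^ len w * (-1) ^ (len u + len v - len w) * f u * g v = twist f u * twist g v"
      by (simp add: twist_def power_add mult_ac)
  qed
  finally show "twist (rmul f g) w = hconv (twist f) (twist g) w"
    by (simp add: hconv_def)
qed

lemma rmul_assoc: "rmul (rmul f g) h = rmul f (rmul g h)"
  by (rule twist_inj) (simp add: twist_rmul hconv_assoc)

lemma rmul_runit_left: "rmul runit f = f"
  by (rule twist_inj) (simp add: twist_rmul hconv_runit_left)

lemma rmul_right_unit_unique:
  fixes f g :: "sinf \<Rightarrow> 'r::comm_ring_1"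
  assumes "\<And>w. non_zero_divisor (\<Sum>u \<in> {u. hprod u w = w}. (-1) ^ len u * f u)"
    and "rmul f g = f"
  shows "g = runit"
proof -
  have "hconv (twist f) (twist g) = twist f"
    using assms(2) by (simp flip: twist_rmul)
  with assms(1) have "twist g = runit"
    by (intro hconv_right_unit_unique) (simp_all add: twist_def)
  then show ?thesis
    by (metis twist_twist twist_runit)
qed

theorem lemma4p4:
  fixes f g h :: "sinf \<Rightarrow> 'r::comm_ring_1"
  assumes "\<And>w. non_zero_divisor (\<Sum>u \<in> {u. hprod u w = w}. (-1) ^ len u * f u)"
  shows "(rmul f g = f \<longrightarrow> g = runit) \<and> (rmul f h = runit \<longrightarrow> rmul h f = runit)"
proof (intro conjI impI)
  show "rmul f g = f \<Longrightarrow> g = runit"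
    using assms by (rule rmul_right_unit_unique)
  assume "rmul f h = runit"
  then have "rmul f (rmul h f) = f"
    by (simp flip: rmul_assoc add: rmul_runit_left)
  with assms show "rmul h f = runit"
    by (rule rmul_right_unit_unique)
qed

end
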